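(* Let $(a,b,c,\lambda)\in(\mathbb F^\times)^4$. For any $\triangle_q$-module $V$ and $v\in V$ the following are equivalent: (i) there exists a $\triangle_q$-module homomorphism $M_\lambda(a,b,c)\to V$ sending $m_0$ to $v$; (ii) $Bv=\theta_0^*v$, $(B-\theta_1^* )Av=(\theta_0(\theta_0^*-\theta_1^* )+\varphi_1)v$, $\beta v=\omega^*v$ and $\gamma v=\omega^\varepsilon v$, where $\omega^*=(c+c^{-1})(a+a^{-1})+(b+b^{-1})(\lambda q+\lambda^{-1}q^{-1})$ and $\omega^\varepsilon=(a+a^{-1})(b+b^{-1})+(c+c^{-1})(\lambda q+\lambda^{-1}q^{-1})$.
   Context: $\mathbb F$ is an algebraically closed field and $q\in\mathbb F^\times$ is a root of unity of order $d\notin\{1,2,4\}$. $\triangle_q$ is the unital associative $\mathbb F$-algebra with generators $A,B,C$ subject to: each of $A+\frac{qBC-q^{-1}CB}{q^2-q^{-2}}$, $B+\frac{qCA-q^{-1}AC}{q^2-q^{-2}}$, $C+\frac{qAB-q^{-1}BA}{q^2-q^{-2}}$ is central; $\alpha,\beta,\gamma$ denote these three central elements multiplied by $q+q^{-1}$. For $(a,b,c,\lambda)\in(\mathbb F^\times)^4$ and $i\in\mathbb N$: $\theta_i=a\lambda^{-1}q^{2i}+a^{-1}\lambda q^{-2i}$, $\theta_i^*=b\lambda^{-1}q^{2i}+b^{-1}\lambda q^{-2i}$, $\varphi_i=a^{-1}b^{-1}\lambda q(q^i-q^{-i})(\lambda^{-1}q^{i-1}-\lambda q^{1-i})(q^{-i}-abc\lambda^{-1}q^{i-1})(q^{-i}-abc^{-1}\lambda^{-1}q^{i-1})$.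 The Verma module $M_\lambda(a,b,c)$ is the $\triangle_q$-module with basis $\{m_i\}_{i\in\mathbb N}$ such that $(A-\theta_i)m_i=m_{i+1}$, $(B-\theta_i^* )m_i=\varphi_im_{i-1}$ for all $i$ ($m_{-1}$ arbitrary), and $\alpha,\beta,\gamma$ act as the scalars $(b+b^{-1})(c+c^{-1})+(a+a^{-1})(\lambda q+\lambda^{-1}q^{-1})$, $(c+c^{-1})(a+a^{-1})+(b+b^{-1})(\lambda q+\lambda^{-1}q^{-1})$, $(a+a^{-1})(b+b^{-1})+(c+c^{-1})(\lambda q+\lambda^{-1}q^{-1})$ respectively. *)

theory Defs
  imports Main "HOL-Computational_Algebra.Polynomial" "HOL-Library.Poly_Mapping"
begin

definition root_of_unity_order :: "'f::field \<Rightarrow> nat \<Rightarrow> bool" where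
  "root_of_unity_order q d \<longleftrightarrow> 0 < d \<and> q ^ d = 1 \<and> (\<forall>k. 0 < k \<and> k < d \<longrightarrow> q ^ k \<noteq> 1)"

definition theta :: "'f::field \<Rightarrow> 'f \<Rightarrow> 'f \<Rightarrow> nat \<Rightarrow> 'f" where
  "theta q a lam i = a / lam * q powi (2 * int i) + lam / a * q powi (- 2 * int i)"

definition theta_s :: "'f::field \<Rightarrow> 'f \<Rightarrow> 'f \<Rightarrow> nat \<Rightarrow> 'f" where
  "theta_s q b lam i = b / lam * q powi (2 * int i) + lam / b * q powi (- 2 * int i)"

definition phi :: "'f::field \<Rightarrow> 'f \<Rightarrow> 'f \<Rightarrow> 'f \<Rightarrow> 'f \<Rightarrow> nat \<Rightarrow> 'f" where
  "phi q a b c lam i =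
     lam * q / (a * b)
     * (q powi int i - q powi (- int i))
     * (q powi (int i - 1) / lam - lam * q powi (1 - int i))
     * (q powi (- int i) - a * b * c / lam * q powi (int i - 1))
     * (q powi (- int i) - a * b / (c * lam) * q powi (int i - 1))"

text \<open>A Delta_q-module is a vector space V (given by its scalar multiplication) together
  with three linear operators A, B, C on V such that each of the three defining elements
  acts by an operator commuting with the actions of A, B, C (i.e. is central).\<close>

definition alpha_op :: "('f::field \<Rightarrow> 'v::ab_group_add \<Rightarrow> 'v) \<Rightarrow> 'f \<Rightarrow> ('v \<Rightarrow> 'v) \<Rightarrow> ('v \<Rightarrow> 'v) \<Rightarrow> ('v \<Rightarrow> 'v) \<Rightarrow> 'v \<Rightarrow> 'v" where
  "alpha_op sc q A B C v = sc (q + inverse q)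
     (A v + sc (inverse (q^2 - inverse (q^2))) (sc q (B (C v)) - sc (inverse q) (C (B v))))"

definition beta_op :: "('f::field \<Rightarrow> 'v::ab_group_add \<Rightarrow> 'v) \<Rightarrow> 'f \<Rightarrow> ('v \<Rightarrow> 'v) \<Rightarrow> ('v \<Rightarrow> 'v) \<Rightarrow> ('v \<Rightarrow> 'v) \<Rightarrow> 'v \<Rightarrow> 'v" where
  "beta_op sc q A B C v = sc (q + inverse q)
     (B v + sc (inverse (q^2 - inverse (q^2))) (sc q (C (A v)) - sc (inverse q) (A (C v))))"

definition gamma_op :: "('f::field \<Rightarrow> 'v::ab_group_add \<Rightarrow> 'v) \<Rightarrow> 'f \<Rightarrow> ('v \<Rightarrow> 'v) \<Rightarrow> ('v \<Rightarrow> 'v) \<Rightarrow> ('v \<Rightarrow> 'v) \<Rightarrow> 'v \<Rightarrow> 'v" where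
  "gamma_op sc q A B C v = sc (q + inverse q)
     (C v + sc (inverse (q^2 - inverse (q^2))) (sc q (A (B v)) - sc (inverse q) (B (A v))))"

definition delta_module :: "('f::field \<Rightarrow> 'v::ab_group_add \<Rightarrow> 'v) \<Rightarrow> 'f \<Rightarrow> ('v \<Rightarrow> 'v) \<Rightarrow> ('v \<Rightarrow> 'v) \<Rightarrow> ('v \<Rightarrow> 'v) \<Rightarrow> bool" where
  "delta_module sc q A B C \<longleftrightarrow>
     vector_space sc \<and>
     Vector_Spaces.linear sc sc A \<and> Vector_Spaces.linear sc sc B \<and> Vector_Spaces.linear sc sc C \<and>
     (\<forall>Z \<in> {alpha_op sc q A B C, beta_op sc q A B C, gamma_op sc q A B C}.
        \<forall>X \<in> {A, B, C}. Z \<circ> X = X \<circ> Z)"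

definition delta_hom ::
  "('f::field \<Rightarrow> 'u::ab_group_add \<Rightarrow> 'u) \<Rightarrow> ('u \<Rightarrow> 'u) \<Rightarrow> ('u \<Rightarrow> 'u) \<Rightarrow> ('u \<Rightarrow> 'u) \<Rightarrow>
   ('f \<Rightarrow> 'v::ab_group_add \<Rightarrow> 'v) \<Rightarrow> ('v \<Rightarrow> 'v) \<Rightarrow> ('v \<Rightarrow> 'v) \<Rightarrow> ('v \<Rightarrow> 'v) \<Rightarrow> ('u \<Rightarrow> 'v) \<Rightarrow> bool" where
  "delta_hom sc1 A1 B1 C1 sc2 A2 B2 C2 f \<longleftrightarrow>
     Vector_Spaces.linear sc1 sc2 f \<and>
     (\<forall>x. f (A1 x) = A2 (f x)) \<and> (\<forall>x. f (B1 x) = B2 (f x)) \<and> (\<forall>x. f (C1 x) = C2 (f x))"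

text \<open>Underlying space: finitely supported coefficient sequences (nat to F); the basis
  vector m_i is Poly_Mapping.single i 1.\<close>

definition vscale :: "'f::field \<Rightarrow> (nat \<Rightarrow>\<^sub>0 'f) \<Rightarrow> (nat \<Rightarrow>\<^sub>0 'f)" where
  "vscale t x = Abs_poly_mapping (\<lambda>i. t * Poly_Mapping.lookup x i)"

definition verma_m :: "nat \<Rightarrow> (nat \<Rightarrow>\<^sub>0 'f::field)" where
  "verma_m i = Poly_Mapping.single i 1"

text \<open>A m_i = theta_i m_i + m_{i+1}\<close>
definition verma_A :: "'f::field \<Rightarrow> 'f \<Rightarrow> 'f \<Rightarrow> 'f \<Rightarrow> 'f \<Rightarrow> (nat \<Rightarrow>\<^sub>0 'f) \<Rightarrow> (nat \<Rightarrow>\<^sub>0 'f)" where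
  "verma_A q a b c lam x = Abs_poly_mapping
     (\<lambda>i. theta q a lam i * Poly_Mapping.lookup x i + (if i = 0 then 0 else Poly_Mapping.lookup x (i - 1)))"

text \<open>B m_i = theta^*_i m_i + varphi_i m_{i-1}\<close>
definition verma_B :: "'f::field \<Rightarrow> 'f \<Rightarrow> 'f \<Rightarrow> 'f \<Rightarrow> 'f \<Rightarrow> (nat \<Rightarrow>\<^sub>0 'f) \<Rightarrow> (nat \<Rightarrow>\<^sub>0 'f)" where
  "verma_B q a b c lam x = Abs_poly_mapping
     (\<lambda>i. theta_s q b lam i * Poly_Mapping.lookup x i + phi q a b c lam (Suc i) * Poly_Mapping.lookup x (Suc i))"

definition omega_a :: "'f::field \<Rightarrow> 'f \<Rightarrow> 'f \<Rightarrow> 'f \<Rightarrow> 'f \<Rightarrow> 'f" where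
  "omega_a q a b c lam = (b + inverse b) * (c + inverse c) + (a + inverse a) * (lam * q + inverse lam * inverse q)"

definition omega_b :: "'f::field \<Rightarrow> 'f \<Rightarrow> 'f \<Rightarrow> 'f \<Rightarrow> 'f \<Rightarrow> 'f" where
  "omega_b q a b c lam = (c + inverse c) * (a + inverse a) + (b + inverse b) * (lam * q + inverse lam * inverse q)"

definition omega_c :: "'f::field \<Rightarrow> 'f \<Rightarrow> 'f \<Rightarrow> 'f \<Rightarrow> 'f \<Rightarrow> 'f" where
  "omega_c q a b c lam = (a + inverse a) * (b + inverse b) + (c + inverse c) * (lam * q + inverse lam * inverse q)"

text \<open>C is determined by the requirement that gamma acts as the scalar omega_c:
  C = omega_c/(q+q^{-1}) - (qAB - q^{-1}BA)/(q^2-q^{-2}).\<close>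
definition verma_C :: "'f::field \<Rightarrow> 'f \<Rightarrow> 'f \<Rightarrow> 'f \<Rightarrow> 'f \<Rightarrow> (nat \<Rightarrow>\<^sub>0 'f) \<Rightarrow> (nat \<Rightarrow>\<^sub>0 'f)" where
  "verma_C q a b c lam x =
     vscale (omega_c q a b c lam / (q + inverse q)) x
     - vscale (inverse (q^2 - inverse (q^2)))
         (vscale q (verma_A q a b c lam (verma_B q a b c lam x))
          - vscale (inverse q) (verma_B q a b c lam (verma_A q a b c lam x)))"

end

theory Submission
  imports Defs
begin

text \<open>
  (i) \<Longrightarrow> (ii): the four relations hold for \<open>m\<^sub>0\<close> in \<open>M\<^sub>\<lambda>(a,b,c)\<close> and are transported
  by any homomorphism. Only \<open>\<beta> m\<^sub>0 = \<omega>\<^sup>* m\<^sub>0\<close> needs work. Because \<open>\<gamma>\<close> acts on \<open>M\<^sub>\<lambda>(a,b,c)\<close> as the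
  scalar \<open>\<omega>\<^sup>\<epsilon>\<close> (this is how \<open>C\<close> is defined there), \<open>\<beta>\<close> is determined by the cubic
  \<open>A\<^sup>2B - (q\<^sup>2 + q\<^sup>-\<^sup>2)ABA + BA\<^sup>2\<close>, and on each basis vector \<open>m\<^sub>k\<close> this cubic can be
  computed coordinatewise from three-term recurrences satisfied by \<open>\<theta>\<^sub>i\<close>, \<open>\<theta>\<^sup>*\<^sub>i\<close>, \<open>\<phi>\<^sub>i\<close>.

  (ii) \<Longrightarrow> (i): put \<open>v\<^sub>0 = v\<close>, \<open>v\<^sub>i\<^sub>+\<^sub>1 = (A - \<theta>\<^sub>i) v\<^sub>i\<close> and let \<open>f\<close> be the linear map
  \<open>m\<^sub>i \<mapsto> v\<^sub>i\<close>; it commutes with \<open>A\<close> by construction. Since \<open>\<beta>\<close> and \<open>\<gamma>\<close> are central,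
  they act on every \<open>v\<^sub>i\<close> by \<open>\<omega>\<^sup>*\<close> and \<open>\<omega>\<^sup>\<epsilon>\<close>, so the cubic relation holds at \<open>v\<^sub>i\<close> in \<open>V\<close>
  with the same coefficients as at \<open>m\<^sub>i\<close>. Comparing the two shows that \<open>f B = B f\<close> on
  \<open>m\<^sub>i\<^sub>+\<^sub>2\<close> once it holds on \<open>m\<^sub>i\<close> and \<open>m\<^sub>i\<^sub>+\<^sub>1\<close>; the first two relations of (ii) start
  the induction. Finally \<open>C\<close> is recovered from \<open>A\<close>, \<open>B\<close> and the scalar \<open>\<gamma>\<close> on both sides.
\<close>

section \<open>Identities for \<open>\<theta>\<^sub>i\<close>, \<open>\<theta>\<^sup>*\<^sub>i\<close> and \<open>\<phi>\<^sub>i\<close>\<close>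

lemma theta_s_eq_theta: "theta_s q b lam = theta q b lam"
  by (simp add: fun_eq_iff theta_s_def theta_def)

lemma phi_0 [simp]: "phi q a b c lam 0 = 0"
  by (simp add: phi_def)

lemma power_int_of_nat_shifts:
  fixes q :: "'f::field"
  assumes "q \<noteq> 0"
  shows "q powi (2 * int i) = (q ^ i)\<^sup>2" "q powi (- 2 * int i) = inverse ((q ^ i)\<^sup>2)"
    "q powi int i = q ^ i" "q powi (- int i) = inverse (q ^ i)"
    "q powi (int i - 1) = q ^ i / q" "q powi (1 - int i) = q / q ^ i"
proof -
  have "q powi (2 * int i) = q ^ (2 * i)"
    by (metis of_nat_mult of_nat_numeral power_int_of_nat)
  then show even: "q powi (2 * int i) = (q ^ i)\<^sup>2"
    by (simp add: power_mult mult.commute)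
  show "q powi (- 2 * int i) = inverse ((q ^ i)\<^sup>2)"
    by (metis even minus_mult_left power_int_minus)
  show "q powi int i = q ^ i" "q powi (- int i) = inverse (q ^ i)"
    by (simp_all add: power_int_minus)
  show "q powi (int i - 1) = q ^ i / q" "q powi (1 - int i) = q / q ^ i"
    using assms by (simp_all add: power_int_diff)
qed

lemma theta_eq_power:
  "q \<noteq> 0 \<Longrightarrow> theta q a lam i = a / lam * (q ^ i)\<^sup>2 + lam / a * inverse ((q ^ i)\<^sup>2)"
  by (unfold theta_def power_int_of_nat_shifts) (rule refl)

lemma phi_eq_power:
  "q \<noteq> 0 \<Longrightarrow> phi q a b c lam i = lam * q / (a * b)
     * (q ^ i - inverse (q ^ i))
     * (q ^ i / q / lam - lam * (q / q ^ i))
     * (inverse (q ^ i) - a * b * c / lam * (q ^ i / q))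
     * (inverse (q ^ i) - a * b / (c * lam) * (q ^ i / q))"
  by (unfold phi_def power_int_of_nat_shifts) (rule refl)

lemma theta_recurrence:
  fixes q :: "'f::field"
  assumes "q \<noteq> 0" "a \<noteq> 0" "lam \<noteq> 0"
  shows "theta q a lam k - (q\<^sup>2 + inverse (q\<^sup>2)) * theta q a lam (Suc k) + theta q a lam (Suc (Suc k)) = 0"
  using assms by (simp add: theta_eq_power power_Suc field_simps)

lemma theta_quadratic:
  fixes q :: "'f::field"
  assumes "q \<noteq> 0" "a \<noteq> 0" "lam \<noteq> 0"
  shows "(theta q a lam k)\<^sup>2 - (q\<^sup>2 + inverse (q\<^sup>2)) * theta q a lam k * theta q a lam (Suc k)
    + (theta q a lam (Suc k))\<^sup>2 = - (q\<^sup>2 - inverse (q\<^sup>2))\<^sup>2"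
proof -
  have "q ^ k \<noteq> 0" using assms(1) by simp
  then show ?thesis
    using assms unfolding theta_eq_power[OF assms(1)] power_Suc
    by (simp add: field_simps) algebra
qed

lemma phi_recurrence:
  fixes q :: "'f::field"
  assumes "q \<noteq> 0" "a \<noteq> 0" "b \<noteq> 0" "c \<noteq> 0" "lam \<noteq> 0"
  shows "phi q a b c lam k - (q\<^sup>2 + inverse (q\<^sup>2)) * phi q a b c lam (Suc k) + phi q a b c lam (Suc (Suc k))
    = (q\<^sup>2 + inverse (q\<^sup>2) - 1) * (theta q a lam k * theta q b lam k + theta q a lam (Suc k) * theta q b lam (Suc k))
      - theta q a lam (Suc k) * theta q b lam k - theta q a lam k * theta q b lam (Suc k)
      - (q - inverse q)\<^sup>2 * omega_c q a b c lam"
proof -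
  have "q ^ k \<noteq> 0" using assms(1) by simp
  then show ?thesis
    using assms unfolding theta_eq_power[OF assms(1)] phi_eq_power[OF assms(1)] omega_c_def power_Suc
    by (simp add: field_simps) algebra
qed

lemma phi_theta_relation:
  fixes q :: "'f::field"
  assumes "q \<noteq> 0" "a \<noteq> 0" "b \<noteq> 0" "c \<noteq> 0" "lam \<noteq> 0"
  shows "phi q a b c lam k * (theta q a lam k - theta q a lam (Suc k))
     + phi q a b c lam (Suc k) * (theta q a lam k + theta q a lam (Suc k) - (q\<^sup>2 + inverse (q\<^sup>2)) * theta q a lam k)
   = (q\<^sup>2 - inverse (q\<^sup>2)) * (q - inverse q) * omega_b q a b c lam
     - (q\<^sup>2 - inverse (q\<^sup>2))\<^sup>2 * theta q b lam k
     - (q - inverse q)\<^sup>2 * omega_c q a b c lam * theta q a lam k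
     + (q - inverse q)\<^sup>2 * (theta q a lam k)\<^sup>2 * theta q b lam k"
proof -
  have "q ^ k \<noteq> 0" using assms(1) by simp
  then show ?thesis
    using assms
    unfolding theta_eq_power[OF assms(1)] phi_eq_power[OF assms(1)] omega_b_def omega_c_def power_Suc
    by (simp add: field_simps) algebra
qed

section \<open>The Verma module in coordinates\<close>

lemma lookup_vscale [simp]: "Poly_Mapping.lookup (vscale t x) = (\<lambda>i. t * Poly_Mapping.lookup x i)"
  unfolding vscale_def
  by (rule lookup_Abs_poly_mapping, rule finite_subset[of _ "Poly_Mapping.keys x"])
    (auto simp: Poly_Mapping.in_keys_iff)

lemma lookup_verma_A: "Poly_Mapping.lookup (verma_A q a b c lam x) =
   (\<lambda>i. theta q a lam i * Poly_Mapping.lookup x i + (if i = 0 then 0 else Poly_Mapping.lookup x (i - 1)))"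
  unfolding verma_A_def
proof (rule lookup_Abs_poly_mapping, rule finite_subset[of _ "Poly_Mapping.keys x \<union> Suc ` Poly_Mapping.keys x"])
  show "{i. theta q a lam i * Poly_Mapping.lookup x i + (if i = 0 then 0 else Poly_Mapping.lookup x (i - 1)) \<noteq> 0}
    \<subseteq> Poly_Mapping.keys x \<union> Suc ` Poly_Mapping.keys x"
  proof
    fix i assume "i \<in> {i. theta q a lam i * Poly_Mapping.lookup x i + (if i = 0 then 0 else Poly_Mapping.lookup x (i - 1)) \<noteq> 0}"
    then show "i \<in> Poly_Mapping.keys x \<union> Suc ` Poly_Mapping.keys x"
      by (cases i) (auto simp: Poly_Mapping.in_keys_iff split: if_splits)
  qed
qed auto

lemma lookup_verma_B: "Poly_Mapping.lookup (verma_B q a b c lam x) =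
   (\<lambda>i. theta_s q b lam i * Poly_Mapping.lookup x i + phi q a b c lam (Suc i) * Poly_Mapping.lookup x (Suc i))"
  unfolding verma_B_def
proof (rule lookup_Abs_poly_mapping, rule finite_subset[of _ "Poly_Mapping.keys x \<union> (\<lambda>i. i - 1) ` Poly_Mapping.keys x"])
  show "{i. theta_s q b lam i * Poly_Mapping.lookup x i + phi q a b c lam (Suc i) * Poly_Mapping.lookup x (Suc i) \<noteq> 0}
    \<subseteq> Poly_Mapping.keys x \<union> (\<lambda>i. i - 1) ` Poly_Mapping.keys x"
  proof
    fix i assume "i \<in> {i. theta_s q b lam i * Poly_Mapping.lookup x i + phi q a b c lam (Suc i) * Poly_Mapping.lookup x (Suc i) \<noteq> 0}"
    then have "Poly_Mapping.lookup x i \<noteq> 0 \<or> Poly_Mapping.lookup x (Suc i) \<noteq> 0" by auto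
    then show "i \<in> Poly_Mapping.keys x \<union> (\<lambda>i. i - 1) ` Poly_Mapping.keys x"
      by (auto simp: Poly_Mapping.in_keys_iff image_iff intro: bexI[of _ "Suc i"])
  qed
qed auto

lemma lookup_verma_m: "Poly_Mapping.lookup (verma_m i) j = (if j = i then 1 else 0)"
  by (simp add: verma_m_def lookup_single when_def)

lemma vector_space_vscale: "vector_space (vscale :: 'f::field \<Rightarrow> _)"
  by unfold_locales (auto intro!: poly_mapping_eqI simp: lookup_add algebra_simps)

lemma module_vscale: "module (vscale :: 'f::field \<Rightarrow> _)"
  using vector_space_vscale by (simp add: vector_space_def module_def)

lemma linear_verma_A: "Vector_Spaces.linear vscale vscale (verma_A q a b c lam)"
  unfolding Vector_Spaces.linear_iff
  by (auto simp: vector_space_vscale lookup_verma_A lookup_add algebra_simps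
      intro!: poly_mapping_eqI)

lemma linear_verma_B: "Vector_Spaces.linear vscale vscale (verma_B q a b c lam)"
  unfolding Vector_Spaces.linear_iff
  by (auto simp: vector_space_vscale lookup_verma_B lookup_add algebra_simps
      intro!: poly_mapping_eqI)

lemma verma_A_m: "verma_A q a b c lam (verma_m k) = vscale (theta q a lam k) (verma_m k) + verma_m (Suc k)"
  by (rule poly_mapping_eqI) (auto simp: lookup_verma_A lookup_add lookup_verma_m)

lemma verma_B_m0: "verma_B q a b c lam (verma_m 0) = vscale (theta_s q b lam 0) (verma_m 0)"
  by (rule poly_mapping_eqI) (auto simp: lookup_verma_B lookup_verma_m)

lemma verma_B_m_Suc: "verma_B q a b c lam (verma_m (Suc k)) =
    vscale (theta_s q b lam (Suc k)) (verma_m (Suc k)) + vscale (phi q a b c lam (Suc k)) (verma_m k)"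
  by (rule poly_mapping_eqI) (auto simp: lookup_verma_B lookup_add lookup_verma_m)

lemma verma_B_A_m0:
  "verma_B q a b c lam (verma_A q a b c lam (verma_m 0))
   = vscale (theta_s q b lam 1) (verma_A q a b c lam (verma_m 0))
     + vscale (theta q a lam 0 * (theta_s q b lam 0 - theta_s q b lam 1) + phi q a b c lam 1) (verma_m 0)"
proof (rule poly_mapping_eqI)
  fix j
  show "Poly_Mapping.lookup (verma_B q a b c lam (verma_A q a b c lam (verma_m 0))) j = Poly_Mapping.lookup
     (vscale (theta_s q b lam 1) (verma_A q a b c lam (verma_m 0))
      + vscale (theta q a lam 0 * (theta_s q b lam 0 - theta_s q b lam 1) + phi q a b c lam 1) (verma_m 0)) j"
    by (cases j) (auto simp: lookup_verma_A lookup_verma_B lookup_add lookup_verma_m algebra_simps)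
qed

lemma verma_m_expansion: "x = (\<Sum>k\<in>Poly_Mapping.keys x. vscale (Poly_Mapping.lookup x k) (verma_m k))"
proof (rule poly_mapping_eqI)
  fix j
  have "Poly_Mapping.lookup (\<Sum>k\<in>Poly_Mapping.keys x. vscale (Poly_Mapping.lookup x k) (verma_m k)) j
      = (\<Sum>k\<in>Poly_Mapping.keys x. if k = j then Poly_Mapping.lookup x k else 0)"
    unfolding lookup_sum by (rule sum.cong) (auto simp: lookup_verma_m)
  also have "\<dots> = Poly_Mapping.lookup x j"
    by (simp add: sum.delta' Poly_Mapping.in_keys_iff)
  finally show "Poly_Mapping.lookup x j
      = Poly_Mapping.lookup (\<Sum>k\<in>Poly_Mapping.keys x. vscale (Poly_Mapping.lookup x k) (verma_m k)) j" ..
qed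

lemma module_hom_eq_on_verma_m:
  assumes "module_hom vscale s f" "module_hom vscale s g" "\<And>k. f (verma_m k) = g (verma_m k)"
  shows "f x = g x"
proof -
  interpret f: module_hom vscale s f by fact
  interpret g: module_hom vscale s g by fact
  show ?thesis
    by (subst (1 2) verma_m_expansion) (simp add: f.sum g.sum f.scale g.scale assms(3))
qed

definition verma_extend :: "('f::field \<Rightarrow> 'v::ab_group_add \<Rightarrow> 'v) \<Rightarrow> (nat \<Rightarrow> 'v) \<Rightarrow> (nat \<Rightarrow>\<^sub>0 'f) \<Rightarrow> 'v" where
  "verma_extend sc w x = (\<Sum>k\<in>Poly_Mapping.keys x. sc (Poly_Mapping.lookup x k) (w k))"

context vector_space
begin

lemma verma_extend_support:
  assumes "finite S" "Poly_Mapping.keys x \<subseteq> S"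
  shows "verma_extend scale w x = (\<Sum>k\<in>S. scale (Poly_Mapping.lookup x k) (w k))"
  unfolding verma_extend_def
  by (rule sum.mono_neutral_left[OF assms]) (simp add: Poly_Mapping.in_keys_iff)

lemma verma_extend_add: "verma_extend scale w (x + y) = verma_extend scale w x + verma_extend scale w y"
proof -
  let ?S = "Poly_Mapping.keys x \<union> Poly_Mapping.keys y"
  have "verma_extend scale w (x + y) = (\<Sum>k\<in>?S. scale (Poly_Mapping.lookup (x + y) k) (w k))"
    by (rule verma_extend_support) (use keys_add[of x y] in auto)
  also have "\<dots> = (\<Sum>k\<in>?S. scale (Poly_Mapping.lookup x k) (w k)) + (\<Sum>k\<in>?S. scale (Poly_Mapping.lookup y k) (w k))"
    by (simp add: lookup_add scale_left_distrib sum.distrib)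
  also have "\<dots> = verma_extend scale w x + verma_extend scale w y"
    by (simp only: verma_extend_support[of ?S x w, symmetric] verma_extend_support[of ?S y w, symmetric]
        finite_keys finite_Un Un_upper1 Un_upper2)
  finally show ?thesis .
qed

lemma verma_extend_vscale: "verma_extend scale w (vscale t x) = scale t (verma_extend scale w x)"
proof -
  have "Poly_Mapping.keys (vscale t x) \<subseteq> Poly_Mapping.keys x"
    by (auto simp: Poly_Mapping.in_keys_iff)
  then have "verma_extend scale w (vscale t x) = (\<Sum>k\<in>Poly_Mapping.keys x. scale (t * Poly_Mapping.lookup x k) (w k))"
    by (simp add: verma_extend_support[of "Poly_Mapping.keys x"])
  also have "\<dots> = scale t (verma_extend scale w x)"
    by (simp add: verma_extend_def scale_sum_right)
  finally show ?thesis .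
qed

lemma module_hom_verma_extend: "module_hom vscale scale (verma_extend scale w)"
  unfolding module_hom_iff
  by (intro conjI allI module_vscale module_axioms
      verma_extend_add verma_extend_vscale)

lemma verma_extend_m [simp]: "verma_extend scale w (verma_m k) = w k"
  unfolding verma_extend_def verma_m_def by simp

end

section \<open>The tridiagonal cubic\<close>

definition tridiagonal_cubic :: "('f::field \<Rightarrow> 'v::ab_group_add \<Rightarrow> 'v) \<Rightarrow> 'f \<Rightarrow> ('v \<Rightarrow> 'v) \<Rightarrow> ('v \<Rightarrow> 'v) \<Rightarrow> 'v \<Rightarrow> 'v"
  where "tridiagonal_cubic sc q A B x = A (A (B x)) - sc (q\<^sup>2 + inverse (q\<^sup>2)) (A (B (A x))) + B (A (A x))"

definition tridiagonal_relation ::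
  "('f::field \<Rightarrow> 'v::ab_group_add \<Rightarrow> 'v) \<Rightarrow> 'f \<Rightarrow> ('v \<Rightarrow> 'v) \<Rightarrow> ('v \<Rightarrow> 'v) \<Rightarrow> 'f \<Rightarrow> 'f \<Rightarrow> 'v \<Rightarrow> bool"
  where "tridiagonal_relation sc q A B t w x \<longleftrightarrow>
    tridiagonal_cubic sc q A B x = sc ((q\<^sup>2 - inverse (q\<^sup>2)) * (q - inverse q) * t) x
      - sc ((q\<^sup>2 - inverse (q\<^sup>2))\<^sup>2) (B x) - sc ((q - inverse q)\<^sup>2 * w) (A x)"

locale q_linear_action = vector_space sc for sc :: "'f::field \<Rightarrow> 'v::ab_group_add \<Rightarrow> 'v" +
  fixes q :: 'f and A :: "'v \<Rightarrow> 'v"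
  assumes linear_A: "Vector_Spaces.linear sc sc A"
    and q_nonzero: "q \<noteq> 0" and q_pow4_neq_1: "q ^ 4 \<noteq> 1"
begin

sublocale A: module_hom sc sc A
  using linear_A by (simp add: module_hom_iff_linear)

lemma q_factors_nonzero: "q - inverse q \<noteq> 0" "q + inverse q \<noteq> 0"
proof -
  have "q\<^sup>2 * ((q - inverse q) * (q + inverse q)) = q ^ 4 - 1"
    using q_nonzero by (simp add: field_simps power2_eq_square power4_eq_xxxx)
  then have "(q - inverse q) * (q + inverse q) \<noteq> 0"
    using q_pow4_neq_1 by auto
  then show "q - inverse q \<noteq> 0" "q + inverse q \<noteq> 0"
    by auto
qed

lemma q2_minus_inverse_eq: "q\<^sup>2 - inverse (q\<^sup>2) = (q - inverse q) * (q + inverse q)"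
  using q_nonzero by (simp add: field_simps power2_eq_square)

lemma C_eq_of_gamma_op:
  assumes "gamma_op sc q A B C y = sc w y"
  shows "C y = sc (w / (q + inverse q)) y
     - sc (inverse (q\<^sup>2 - inverse (q\<^sup>2))) (sc q (A (B y)) - sc (inverse q) (B (A y)))"
proof -
  let ?p = "q + inverse q"
    and ?Z = "sc (inverse (q\<^sup>2 - inverse (q\<^sup>2))) (sc q (A (B y)) - sc (inverse q) (B (A y)))"
  have "C y + ?Z = sc (inverse ?p) (sc ?p (C y + ?Z))"
    using q_factors_nonzero(2) by simp
  also have "\<dots> = sc (w / ?p) y"
    using assms by (simp add: gamma_op_def divide_inverse mult.commute)
  finally show ?thesis
    by (simp add: eq_diff_eq)
qed

lemma commutator_C_A_eq_tridiagonal_cubic: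
  assumes "C x = sc u x - sc s (sc q (A (B x)) - sc (inverse q) (B (A x)))"
    and "C (A x) = sc u (A x) - sc s (sc q (A (B (A x))) - sc (inverse q) (B (A (A x))))"
  shows "sc q (C (A x)) - sc (inverse q) (A (C x)) = sc ((q - inverse q) * u) (A x) + sc s (tridiagonal_cubic sc q A B x)"
proof -
  have cancel: "q * (t * inverse q) = t" for t
    using q_nonzero by simp
  show ?thesis
    unfolding assms
    by (simp add: cancel tridiagonal_cubic_def A.diff A.add A.scale scale_right_diff_distrib scale_right_distrib
        scale_left_diff_distrib power2_eq_square algebra_simps)
qed

lemma tridiagonal_cubic_eq_beta_op:
  assumes "gamma_op sc q A B C x = sc w x" "gamma_op sc q A B C (A x) = sc w (A x)"
  shows "tridiagonal_cubic sc q A B x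
    = sc ((q\<^sup>2 - inverse (q\<^sup>2)) * (q - inverse q)) (beta_op sc q A B C x)
      - sc ((q\<^sup>2 - inverse (q\<^sup>2))\<^sup>2) (B x) - sc ((q - inverse q)\<^sup>2 * w) (A x)"
proof -
  define p d Q where "p = q + inverse q" and "d = q - inverse q" and "Q = q\<^sup>2 - inverse (q\<^sup>2)"
  have "p \<noteq> 0" "d \<noteq> 0" and Q_eq: "Q = d * p"
    using q_factors_nonzero q2_minus_inverse_eq by (simp_all add: p_def d_def Q_def)
  have comm: "sc q (C (A x)) - sc (inverse q) (A (C x))
      = sc (d * (w / p)) (A x) + sc (inverse Q) (tridiagonal_cubic sc q A B x)"
    unfolding p_def d_def Q_def
    by (rule commutator_C_A_eq_tridiagonal_cubic C_eq_of_gamma_op assms)+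
  have "sc (Q * d) (beta_op sc q A B C x)
      = sc (Q * d * p) (B x) + sc (Q * d * p * inverse Q * (d * (w / p))) (A x)
        + sc (Q * d * p * inverse Q * inverse Q) (tridiagonal_cubic sc q A B x)"
    unfolding beta_op_def p_def[symmetric] Q_def[symmetric]
    by (simp add: comm scale_right_distrib mult.assoc)
  also have "\<dots> = sc (Q\<^sup>2) (B x) + sc (d\<^sup>2 * w) (A x) + tridiagonal_cubic sc q A B x"
  proof -
    have "Q * d * p = Q\<^sup>2"
      by (simp add: Q_eq power2_eq_square)
    moreover have "Q * d * p * inverse Q * (d * (w / p)) = d\<^sup>2 * w"
      and "Q * d * p * inverse Q * inverse Q = 1"
      using \<open>p \<noteq> 0\<close> \<open>d \<noteq> 0\<close> by (simp_all add: Q_eq field_simps power2_eq_square)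
    ultimately show ?thesis
      by simp
  qed
  finally show ?thesis
    by (simp add: Q_def d_def algebra_simps)
qed

lemma beta_op_eq_iff_tridiagonal_relation:
  assumes "gamma_op sc q A B C x = sc w x" "gamma_op sc q A B C (A x) = sc w (A x)"
  shows "beta_op sc q A B C x = sc t x \<longleftrightarrow> tridiagonal_relation sc q A B t w x"
proof -
  have "(q\<^sup>2 - inverse (q\<^sup>2)) * (q - inverse q) \<noteq> 0"
    using q_factors_nonzero q2_minus_inverse_eq by simp
  then show ?thesis
    by (simp add: tridiagonal_relation_def tridiagonal_cubic_eq_beta_op[OF assms] flip: scale_scale)
qed

end

lemma tridiagonal_relation_transfer:
  assumes f: "module_hom s1 s2 f" and f_A: "\<And>y. f (A1 y) = A2 (f y)"
    and f_B: "f (B1 x) = B2 (f x)" "f (B1 (A1 x)) = B2 (f (A1 x))"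
    and "tridiagonal_relation s1 q A1 B1 t w x" "tridiagonal_relation s2 q A2 B2 t w (f x)"
  shows "f (B1 (A1 (A1 x))) = B2 (f (A1 (A1 x)))"
proof -
  \<comment> \<open>Apply \<open>f\<close> to the relation at \<open>x\<close>: every term but \<open>B\<^sub>1 A\<^sub>1 A\<^sub>1 x\<close> passes through \<open>f\<close> already.\<close>
  interpret f: module_hom s1 s2 f by (rule f)
  let ?L = "A2 (A2 (B2 (f x))) - s2 (q\<^sup>2 + inverse (q\<^sup>2)) (A2 (B2 (A2 (f x))))"
  have "?L + f (B1 (A1 (A1 x))) = f (tridiagonal_cubic s1 q A1 B1 x)"
    by (simp add: tridiagonal_cubic_def f.add f.diff f.scale f_A f_B)
  also have "\<dots> = tridiagonal_cubic s2 q A2 B2 (f x)"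
    using assms(5,6) by (simp add: tridiagonal_relation_def f.diff f.scale f_A f_B)
  also have "\<dots> = ?L + B2 (f (A1 (A1 x)))"
    by (simp add: tridiagonal_cubic_def f_A)
  finally show ?thesis
    by simp
qed

section \<open>Relations on the Verma module\<close>

lemma verma_q_linear_action:
  "q \<noteq> 0 \<Longrightarrow> q ^ 4 \<noteq> 1 \<Longrightarrow> q_linear_action vscale q (verma_A q a b c lam)"
  by (simp add: q_linear_action_def q_linear_action_axioms_def vector_space_vscale linear_verma_A)

lemma verma_gamma_op:
  assumes "q + inverse q \<noteq> 0"
  shows "gamma_op vscale q (verma_A q a b c lam) (verma_B q a b c lam) (verma_C q a b c lam) x
    = vscale (omega_c q a b c lam) x"
proof -
  have "gamma_op vscale q (verma_A q a b c lam) (verma_B q a b c lam) (verma_C q a b c lam) x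
      = vscale (q + inverse q) (vscale (omega_c q a b c lam / (q + inverse q)) x)"
    by (simp add: gamma_op_def verma_C_def)
  also have "\<dots> = vscale (omega_c q a b c lam) x"
    using assms by (intro poly_mapping_eqI) simp
  finally show ?thesis .
qed

context
  fixes q a b c lam :: "'f::field"
  assumes q_nonzero: "q \<noteq> 0" and params_nonzero: "a \<noteq> 0" "b \<noteq> 0" "c \<noteq> 0" "lam \<noteq> 0"
begin

interpretation A: module_hom vscale vscale "verma_A q a b c lam"
  using linear_verma_A by (simp add: module_hom_iff_linear)

interpretation B: module_hom vscale vscale "verma_B q a b c lam"
  using linear_verma_B by (simp add: module_hom_iff_linear)

lemma inverse_q_identities: "q * inverse q = 1" "inverse (q\<^sup>2) = (inverse q)\<^sup>2"
  using q_nonzero by (simp_all add: power_inverse)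

lemmas verma_expand = tridiagonal_relation_def tridiagonal_cubic_def verma_A_m verma_B_m0 verma_B_m_Suc
  A.add A.scale B.add B.scale lookup_add lookup_minus lookup_verma_m theta_s_eq_theta

lemma verma_tridiagonal_relation_m0:
  "tridiagonal_relation vscale q (verma_A q a b c lam) (verma_B q a b c lam)
    (omega_b q a b c lam) (omega_c q a b c lam) (verma_m 0)"
proof -
  note phi = phi_recurrence[OF q_nonzero params_nonzero] phi_theta_relation[OF q_nonzero params_nonzero]
  have "Poly_Mapping.lookup (tridiagonal_cubic vscale q (verma_A q a b c lam) (verma_B q a b c lam) (verma_m 0)) j
    = Poly_Mapping.lookup (vscale ((q\<^sup>2 - inverse (q\<^sup>2)) * (q - inverse q) * omega_b q a b c lam) (verma_m 0)
      - vscale ((q\<^sup>2 - inverse (q\<^sup>2))\<^sup>2) (verma_B q a b c lam (verma_m 0))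
      - vscale ((q - inverse q)\<^sup>2 * omega_c q a b c lam) (verma_A q a b c lam (verma_m 0))) j" for j
  proof -
    consider "j = 0" | "j = 1" | "j = 2" | "j > 2"
      by linarith
    then show ?thesis
    proof cases
      case 1
      show ?thesis
        unfolding 1 using phi(2)[of 0] inverse_q_identities by (simp add: verma_expand) algebra
    next
      case 2
      show ?thesis
        unfolding 2 using phi(1)[of 0] inverse_q_identities by (simp add: verma_expand) algebra
    next
      case 3
      show ?thesis
        unfolding 3 using theta_recurrence[OF q_nonzero params_nonzero(2,4), of 0]
        by (simp add: verma_expand numeral_2_eq_2)
    qed (simp add: verma_expand)
  qed
  then show ?thesis
    unfolding tridiagonal_relation_def by (auto intro: poly_mapping_eqI)
qed

lemma verma_tridiagonal_relation_m_Suc: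
  "tridiagonal_relation vscale q (verma_A q a b c lam) (verma_B q a b c lam)
    (omega_b q a b c lam) (omega_c q a b c lam) (verma_m (Suc i))"
proof -
  note theta = theta_recurrence[OF q_nonzero params_nonzero(1,4)] theta_quadratic[OF q_nonzero params_nonzero(1,4)]
  note phi = phi_recurrence[OF q_nonzero params_nonzero] phi_theta_relation[OF q_nonzero params_nonzero]
  have "Poly_Mapping.lookup (tridiagonal_cubic vscale q (verma_A q a b c lam) (verma_B q a b c lam) (verma_m (Suc i))) j
    = Poly_Mapping.lookup (vscale ((q\<^sup>2 - inverse (q\<^sup>2)) * (q - inverse q) * omega_b q a b c lam) (verma_m (Suc i))
      - vscale ((q\<^sup>2 - inverse (q\<^sup>2))\<^sup>2) (verma_B q a b c lam (verma_m (Suc i)))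
      - vscale ((q - inverse q)\<^sup>2 * omega_c q a b c lam) (verma_A q a b c lam (verma_m (Suc i)))) j" for j
  proof -
    consider "j = i" | "j = Suc i" | "j = Suc (Suc i)" | "j = Suc (Suc (Suc i))"
      | "j \<notin> {i, Suc i, Suc (Suc i), Suc (Suc (Suc i))}"
      by blast
    then show ?thesis
    proof cases
      case 1
      show ?thesis
        unfolding 1 using theta(2)[of i] by (simp add: verma_expand) algebra
    next
      case 2
      show ?thesis
        unfolding 2 using phi(2)[of "Suc i"] theta(1)[of i] inverse_q_identities by (simp add: verma_expand) algebra
    next
      case 3
      show ?thesis
        unfolding 3 using phi(1)[of "Suc i"] inverse_q_identities by (simp add: verma_expand) algebra
    next
      case 4
      show ?thesis
        unfolding 4 using theta_recurrence[OF q_nonzero params_nonzero(2,4), of "Suc i"]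
        by (simp add: verma_expand)
    qed (simp add: verma_expand)
  qed
  then show ?thesis
    unfolding tridiagonal_relation_def by (auto intro: poly_mapping_eqI)
qed

lemma verma_tridiagonal_relation:
  "tridiagonal_relation vscale q (verma_A q a b c lam) (verma_B q a b c lam)
    (omega_b q a b c lam) (omega_c q a b c lam) (verma_m k)"
  using verma_tridiagonal_relation_m0 verma_tridiagonal_relation_m_Suc by (cases k) auto

end

lemma verma_beta_op_m:
  fixes q :: "'f::field"
  assumes "q \<noteq> 0" "q ^ 4 \<noteq> 1" "a \<noteq> 0" "b \<noteq> 0" "c \<noteq> 0" "lam \<noteq> 0"
  shows "beta_op vscale q (verma_A q a b c lam) (verma_B q a b c lam) (verma_C q a b c lam) (verma_m k)
    = vscale (omega_b q a b c lam) (verma_m k)"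
proof -
  interpret M: q_linear_action vscale q "verma_A q a b c lam"
    using assms(1,2) by (rule verma_q_linear_action)
  have gamma: "gamma_op vscale q (verma_A q a b c lam) (verma_B q a b c lam) (verma_C q a b c lam) x
      = vscale (omega_c q a b c lam) x" for x
    using verma_gamma_op M.q_factors_nonzero(2) by blast
  show ?thesis
    using M.beta_op_eq_iff_tridiagonal_relation[OF gamma gamma] verma_tridiagonal_relation[OF assms(1,3-6)]
    by blast
qed

section \<open>Homomorphisms out of the Verma module\<close>

lemma delta_hom_beta_op:
  assumes "delta_hom s1 A1 B1 C1 s2 A2 B2 C2 f"
  shows "f (beta_op s1 q A1 B1 C1 y) = beta_op s2 q A2 B2 C2 (f y)"
proof -
  interpret f: module_hom s1 s2 f
    using assms by (simp add: delta_hom_def module_hom_iff_linear)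
  show ?thesis
    using assms by (simp add: delta_hom_def beta_op_def f.add f.scale f.diff)
qed

lemma delta_hom_gamma_op:
  assumes "delta_hom s1 A1 B1 C1 s2 A2 B2 C2 f"
  shows "f (gamma_op s1 q A1 B1 C1 y) = gamma_op s2 q A2 B2 C2 (f y)"
proof -
  interpret f: module_hom s1 s2 f
    using assms by (simp add: delta_hom_def module_hom_iff_linear)
  show ?thesis
    using assms by (simp add: delta_hom_def gamma_op_def f.add f.scale f.diff)
qed

lemma verma_hom_image_conditions:
  fixes q :: "'f::field"
  assumes hom: "delta_hom vscale (verma_A q a b c lam) (verma_B q a b c lam) (verma_C q a b c lam) sc A B C f"
    and "q \<noteq> 0" "q ^ 4 \<noteq> 1" "a \<noteq> 0" "b \<noteq> 0" "c \<noteq> 0" "lam \<noteq> 0"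
  shows "B (f (verma_m 0)) = sc (theta_s q b lam 0) (f (verma_m 0))
      \<and> B (A (f (verma_m 0))) - sc (theta_s q b lam 1) (A (f (verma_m 0)))
          = sc (theta q a lam 0 * (theta_s q b lam 0 - theta_s q b lam 1) + phi q a b c lam 1) (f (verma_m 0))
      \<and> beta_op sc q A B C (f (verma_m 0)) = sc (omega_b q a b c lam) (f (verma_m 0))
      \<and> gamma_op sc q A B C (f (verma_m 0)) = sc (omega_c q a b c lam) (f (verma_m 0))"
proof -
  interpret M: q_linear_action vscale q "verma_A q a b c lam"
    using assms(2,3) by (rule verma_q_linear_action)
  interpret f: module_hom vscale sc f
    using hom by (simp add: delta_hom_def module_hom_iff_linear)
  have f_A: "f (verma_A q a b c lam x) = A (f x)" and f_B: "f (verma_B q a b c lam x) = B (f x)" for x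
    using hom by (simp_all add: delta_hom_def)
  have "B (f (verma_m 0)) = sc (theta_s q b lam 0) (f (verma_m 0))"
    using f_B[of "verma_m 0"] by (simp add: verma_B_m0 f.scale)
  moreover have "B (A (f (verma_m 0))) - sc (theta_s q b lam 1) (A (f (verma_m 0)))
      = sc (theta q a lam 0 * (theta_s q b lam 0 - theta_s q b lam 1) + phi q a b c lam 1) (f (verma_m 0))"
  proof -
    have "B (A (f (verma_m 0))) = f (verma_B q a b c lam (verma_A q a b c lam (verma_m 0)))"
      by (simp add: f_A f_B)
    also have "\<dots> = sc (theta_s q b lam 1) (A (f (verma_m 0)))
        + sc (theta q a lam 0 * (theta_s q b lam 0 - theta_s q b lam 1) + phi q a b c lam 1) (f (verma_m 0))"
      by (simp add: verma_B_A_m0 f.add f.scale f_A)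
    finally show ?thesis
      by simp
  qed
  moreover have "beta_op sc q A B C (f (verma_m 0)) = sc (omega_b q a b c lam) (f (verma_m 0))"
    using delta_hom_beta_op[OF hom, of q "verma_m 0"] by (simp add: verma_beta_op_m[OF assms(2-7)] f.scale)
  moreover have "gamma_op sc q A B C (f (verma_m 0)) = sc (omega_c q a b c lam) (f (verma_m 0))"
    using delta_hom_gamma_op[OF hom, of q "verma_m 0"] M.q_factors_nonzero(2)
    by (simp add: verma_gamma_op f.scale)
  ultimately show ?thesis
    by blast
qed

text \<open>\<open>raise_seq sc A \<theta> v k = (A - \<theta>\<^sub>k\<^sub>-\<^sub>1) \<cdots> (A - \<theta>\<^sub>0) v\<close> is the intended image of \<open>m\<^sub>k\<close>.\<close>

primrec raise_seq :: "('f \<Rightarrow> 'v \<Rightarrow> 'v::ab_group_add) \<Rightarrow> ('v \<Rightarrow> 'v) \<Rightarrow> (nat \<Rightarrow> 'f) \<Rightarrow> 'v \<Rightarrow> nat \<Rightarrow> 'v" where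
  "raise_seq sc A th v 0 = v"
| "raise_seq sc A th v (Suc k) = A (raise_seq sc A th v k) - sc (th k) (raise_seq sc A th v k)"

context q_linear_action
begin

lemma raise_seq_eigenvector:
  assumes "module_hom sc sc Z" "\<And>x. Z (A x) = A (Z x)" "Z v = sc t v"
  shows "Z (raise_seq sc A th v k) = sc t (raise_seq sc A th v k)"
proof (induction k)
  case 0
  show ?case
    using assms(3) by simp
next
  case (Suc k)
  interpret Z: module_hom sc sc Z by (rule assms(1))
  show ?case
    by (simp add: Z.diff Z.scale assms(2) Suc A.scale scale_right_diff_distrib scale_left_commute)
qed

end

locale verma_generator = q_linear_action sc q A
  for sc :: "'f::field \<Rightarrow> 'v::ab_group_add \<Rightarrow> 'v" and q A +
  fixes B C :: "'v \<Rightarrow> 'v" and a b c lam :: 'f and v :: 'v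
  assumes linear_B: "Vector_Spaces.linear sc sc B" and linear_C: "Vector_Spaces.linear sc sc C"
    and beta_op_commute_A: "\<And>x. beta_op sc q A B C (A x) = A (beta_op sc q A B C x)"
    and gamma_op_commute_A: "\<And>x. gamma_op sc q A B C (A x) = A (gamma_op sc q A B C x)"
    and params_nonzero: "a \<noteq> 0" "b \<noteq> 0" "c \<noteq> 0" "lam \<noteq> 0"
    and B_v: "B v = sc (theta_s q b lam 0) v"
    and B_A_v: "B (A v) - sc (theta_s q b lam 1) (A v)
      = sc (theta q a lam 0 * (theta_s q b lam 0 - theta_s q b lam 1) + phi q a b c lam 1) v"
    and beta_op_v: "beta_op sc q A B C v = sc (omega_b q a b c lam) v"
    and gamma_op_v: "gamma_op sc q A B C v = sc (omega_c q a b c lam) v"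
begin

sublocale B: module_hom sc sc B
  using linear_B by (simp add: module_hom_iff_linear)

sublocale C: module_hom sc sc C
  using linear_C by (simp add: module_hom_iff_linear)

abbreviation vseq :: "nat \<Rightarrow> 'v" where
  "vseq \<equiv> raise_seq sc A (theta q a lam) v"

abbreviation lift :: "(nat \<Rightarrow>\<^sub>0 'f) \<Rightarrow> 'v" where
  "lift \<equiv> verma_extend sc vseq"

sublocale L: module_hom vscale sc lift
  by (rule module_hom_verma_extend)

sublocale MA: module_hom vscale vscale "verma_A q a b c lam"
  using linear_verma_A by (simp add: module_hom_iff_linear)

sublocale MB: module_hom vscale vscale "verma_B q a b c lam"
  using linear_verma_B by (simp add: module_hom_iff_linear)

lemma module_hom_beta_op: "module_hom sc sc (beta_op sc q A B C)"
  unfolding module_hom_iff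
  by (simp add: module_axioms beta_op_def A.add A.scale B.add B.scale C.add C.scale
      scale_right_distrib scale_right_diff_distrib algebra_simps)

lemma module_hom_gamma_op: "module_hom sc sc (gamma_op sc q A B C)"
  unfolding module_hom_iff
  by (simp add: module_axioms gamma_op_def A.add A.scale B.add B.scale C.add C.scale
      scale_right_distrib scale_right_diff_distrib algebra_simps)

lemma gamma_op_vseq: "gamma_op sc q A B C (vseq k) = sc (omega_c q a b c lam) (vseq k)"
  by (rule raise_seq_eigenvector[OF module_hom_gamma_op gamma_op_commute_A gamma_op_v])

lemma tridiagonal_relation_vseq:
  "tridiagonal_relation sc q A B (omega_b q a b c lam) (omega_c q a b c lam) (vseq k)"
proof -
  have "gamma_op sc q A B C (A (vseq k)) = sc (omega_c q a b c lam) (A (vseq k))"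
    by (simp add: gamma_op_commute_A gamma_op_vseq A.scale)
  then show ?thesis
    using beta_op_eq_iff_tridiagonal_relation[OF gamma_op_vseq]
      raise_seq_eigenvector[OF module_hom_beta_op beta_op_commute_A beta_op_v]
    by blast
qed

lemma lift_A: "lift (verma_A q a b c lam x) = A (lift x)"
proof -
  have "(lift \<circ> verma_A q a b c lam) x = (A \<circ> lift) x"
  proof (rule module_hom_eq_on_verma_m)
    show "module_hom vscale sc (lift \<circ> verma_A q a b c lam)"
      by (rule module_hom_compose[OF MA.module_hom_axioms L.module_hom_axioms])
    show "module_hom vscale sc (A \<circ> lift)"
      by (rule module_hom_compose[OF L.module_hom_axioms A.module_hom_axioms])
    fix k
    show "(lift \<circ> verma_A q a b c lam) (verma_m k) = (A \<circ> lift) (verma_m k)"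
      by (simp add: verma_A_m L.add L.scale)
  qed
  then show ?thesis
    by simp
qed

lemma lift_B_m: "lift (verma_B q a b c lam (verma_m k)) = B (vseq k)"
proof -
  \<comment> \<open>\<open>D\<close> vanishes on \<open>m\<^sub>0, m\<^sub>1\<close> by (ii) and then two steps at a time by the tridiagonal relation.\<close>
  define D where "D x = lift (verma_B q a b c lam x) - B (lift x)" for x
  interpret D: module_hom vscale sc D
    unfolding module_hom_iff D_def
    by (simp add: module_vscale module_axioms L.add L.scale MB.add MB.scale B.add B.scale
        scale_right_diff_distrib)
  have "D (verma_m k) = 0 \<and> D (verma_m (Suc k)) = 0"
  proof (induction k)
    case 0
    have "D (verma_m 0) = 0"
      by (simp add: D_def verma_B_m0 L.scale B_v)
    moreover have "D (verma_A q a b c lam (verma_m 0)) = 0"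
      using B_A_v by (simp add: D_def verma_B_A_m0 L.add L.scale lift_A diff_eq_eq add.commute)
    ultimately show ?case
      by (simp add: verma_A_m D.add D.scale)
  next
    case (Suc k)
    then have "D (verma_A q a b c lam (verma_m k)) = 0"
      by (simp add: verma_A_m D.add D.scale)
    then have "lift (verma_B q a b c lam (verma_A q a b c lam (verma_A q a b c lam (verma_m k))))
        = B (lift (verma_A q a b c lam (verma_A q a b c lam (verma_m k))))"
      using Suc
      by (intro tridiagonal_relation_transfer[OF L.module_hom_axioms lift_A _ _
            verma_tridiagonal_relation[OF q_nonzero params_nonzero]])
        (simp_all add: D_def tridiagonal_relation_vseq)
    then have "D (verma_A q a b c lam (verma_A q a b c lam (verma_m k))) = 0"
      by (simp add: D_def)
    with Suc show ?case
      by (simp add: verma_A_m D.add D.scale MA.add MA.scale)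
  qed
  then show ?thesis
    by (simp add: D_def)
qed

lemma lift_B: "lift (verma_B q a b c lam x) = B (lift x)"
proof -
  have "(lift \<circ> verma_B q a b c lam) x = (B \<circ> lift) x"
  proof (rule module_hom_eq_on_verma_m)
    show "module_hom vscale sc (lift \<circ> verma_B q a b c lam)"
      by (rule module_hom_compose[OF MB.module_hom_axioms L.module_hom_axioms])
    show "module_hom vscale sc (B \<circ> lift)"
      by (rule module_hom_compose[OF L.module_hom_axioms B.module_hom_axioms])
  qed (simp add: lift_B_m)
  then show ?thesis
    by simp
qed

lemma gamma_op_lift: "gamma_op sc q A B C (lift x) = sc (omega_c q a b c lam) (lift x)"
proof -
  have "(gamma_op sc q A B C \<circ> lift) x = ((\<lambda>y. sc (omega_c q a b c lam) y) \<circ> lift) x"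
  proof (rule module_hom_eq_on_verma_m)
    show "module_hom vscale sc (gamma_op sc q A B C \<circ> lift)"
      by (rule module_hom_compose[OF L.module_hom_axioms module_hom_gamma_op])
    have "module_hom sc sc (\<lambda>y. sc (omega_c q a b c lam) y)"
      by (simp add: module_hom_iff module_axioms scale_right_distrib scale_left_commute)
    then show "module_hom vscale sc ((\<lambda>y. sc (omega_c q a b c lam) y) \<circ> lift)"
      by (rule module_hom_compose[OF L.module_hom_axioms])
  qed (simp add: gamma_op_vseq)
  then show ?thesis
    by simp
qed

lemma lift_C: "lift (verma_C q a b c lam x) = C (lift x)"
  unfolding C_eq_of_gamma_op[OF gamma_op_lift] verma_C_def
  by (simp add: L.diff L.scale lift_A lift_B)

lemma delta_hom_lift:
  "delta_hom vscale (verma_A q a b c lam) (verma_B q a b c lam) (verma_C q a b c lam) sc A B C lift"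
  unfolding delta_hom_def module_hom_iff_linear[symmetric]
  by (simp add: L.module_hom_axioms lift_A lift_B lift_C)

end

lemma root_of_unity_order_nondegenerate:
  fixes q :: "'f::field"
  assumes "root_of_unity_order q d" "d \<notin> {1, 2, 4}"
  shows "q \<noteq> 0 \<and> q ^ 4 \<noteq> 1"
proof -
  have d: "0 < d" "q ^ d = 1" "\<And>k. 0 < k \<Longrightarrow> k < d \<Longrightarrow> q ^ k \<noteq> 1"
    using assms(1) unfolding root_of_unity_order_def by auto
  have "q \<noteq> 0"
    using d(1,2) by (cases d) auto
  moreover have "q ^ 4 \<noteq> 1"
  proof
    assume q4: "q ^ 4 = 1"
    then have "d = 3"
      using d(1) d(3)[of 4] assms(2) by (cases "4 < d") auto
    have "q = q ^ 4 / q ^ 3"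
      using \<open>q \<noteq> 0\<close> by (simp add: numeral_eq_Suc)
    also have "\<dots> = 1"
      using q4 d(2) \<open>d = 3\<close> by simp
    finally show False
      using d(3)[of 1] \<open>d = 3\<close> by simp
  qed
  ultimately show ?thesis ..
qed

lemma verma_generator_of_delta_module:
  assumes "delta_module sc q A B C" "q \<noteq> 0" "q ^ 4 \<noteq> 1"
    and "a \<noteq> 0" "b \<noteq> 0" "c \<noteq> 0" "lam \<noteq> 0"
    and "B v = sc (theta_s q b lam 0) v"
    and "B (A v) - sc (theta_s q b lam 1) (A v)
      = sc (theta q a lam 0 * (theta_s q b lam 0 - theta_s q b lam 1) + phi q a b c lam 1) v"
    and "beta_op sc q A B C v = sc (omega_b q a b c lam) v"
    and "gamma_op sc q A B C v = sc (omega_c q a b c lam) v"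
  shows "verma_generator sc q A B C a b c lam v"
proof -
  have "beta_op sc q A B C \<circ> A = A \<circ> beta_op sc q A B C"
    and "gamma_op sc q A B C \<circ> A = A \<circ> gamma_op sc q A B C"
    using assms(1) by (simp_all add: delta_module_def)
  then show ?thesis
    using assms
    by (simp add: verma_generator_def verma_generator_axioms_def q_linear_action_def
        q_linear_action_axioms_def delta_module_def fun_eq_iff)
qed

theorem proposition3p1:
  fixes q a b c lam :: "'f::alg_closed_field"
    and sc :: "'f \<Rightarrow> 'v::ab_group_add \<Rightarrow> 'v"
    and A B C :: "'v \<Rightarrow> 'v"
    and v :: 'v
  assumes q_root: "\<exists>d. root_of_unity_order q d \<and> d \<notin> {1, 2, 4}"
    and a_nz: "a \<noteq> 0" and b_nz: "b \<noteq> 0" and c_nz: "c \<noteq> 0" and lam_nz: "lam \<noteq> 0"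
    and V_module: "delta_module sc q A B C"
  shows "(\<exists>f. delta_hom vscale (verma_A q a b c lam) (verma_B q a b c lam) (verma_C q a b c lam)
                        sc A B C f
             \<and> f (verma_m 0) = v)
     \<longleftrightarrow>
     (B v = sc (theta_s q b lam 0) v
      \<and> B (A v) - sc (theta_s q b lam 1) (A v)
          = sc (theta q a lam 0 * (theta_s q b lam 0 - theta_s q b lam 1) + phi q a b c lam 1) v
      \<and> beta_op sc q A B C v = sc (omega_b q a b c lam) v
      \<and> gamma_op sc q A B C v = sc (omega_c q a b c lam) v)"
proof -
  have q: "q \<noteq> 0" "q ^ 4 \<noteq> 1"
    using q_root root_of_unity_order_nondegenerate by blast+
  show ?thesis
  proof
    assume "\<exists>f. delta_hom vscale (verma_A q a b c lam) (verma_B q a b c lam) (verma_C q a b c lam)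
        sc A B C f \<and> f (verma_m 0) = v"
    then show "B v = sc (theta_s q b lam 0) v
      \<and> B (A v) - sc (theta_s q b lam 1) (A v)
          = sc (theta q a lam 0 * (theta_s q b lam 0 - theta_s q b lam 1) + phi q a b c lam 1) v
      \<and> beta_op sc q A B C v = sc (omega_b q a b c lam) v
      \<and> gamma_op sc q A B C v = sc (omega_c q a b c lam) v"
      using verma_hom_image_conditions[OF _ q a_nz b_nz c_nz lam_nz] by blast
  next
    assume "B v = sc (theta_s q b lam 0) v
      \<and> B (A v) - sc (theta_s q b lam 1) (A v)
          = sc (theta q a lam 0 * (theta_s q b lam 0 - theta_s q b lam 1) + phi q a b c lam 1) v
      \<and> beta_op sc q A B C v = sc (omega_b q a b c lam) v
      \<and> gamma_op sc q A B C v = sc (omega_c q a b c lam) v"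
    then interpret verma_generator sc q A B C a b c lam v
      using verma_generator_of_delta_module[OF V_module q a_nz b_nz c_nz lam_nz] by blast
    show "\<exists>f. delta_hom vscale (verma_A q a b c lam) (verma_B q a b c lam) (verma_C q a b c lam)
        sc A B C f \<and> f (verma_m 0) = v"
      using delta_hom_lift by auto
  qed
qed

end
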